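(* Let $j_1,j_2$ be real numbers and $p\in\{0,1\}$. Let $\Psi_1$ be the generating highest-weight vector, of parity $p$, of a chiral $\mathfrak{sl}(2|1)$-module $[j_1,\mp j_1]$ and $\Psi_2$ the generating vector of the chiral module $[j_2,\pm j_2]$ of opposite chirality (upper signs: $\Psi_1$ left-chiral, $\Psi_2$ right-chiral; lower signs: the reverse). Let $\mathbf U_+=\mathbf V_++\mathbf W_+$. Then for every $n\ge0$, $$n!\sum_{k_1+k_2=2n}\frac{(-1)^{\lfloor (k_1+1-p)/2\rfloor}}{\Gamma\!\left(1+\lfloor\frac{k_1}{2}\rfloor\right)\Gamma\!\left(1+\lfloor\frac{k_2}{2}\rfloor\right)\Gamma\!\left(2j_1+\lfloor\frac{k_1+1}{2}\rfloor\right)\Gamma\!\left(2j_2+\lfloor\frac{k_2+1}{2}\rfloor\right)}\ \mathbf U_+^{k_1}\Psi_1\otimes\mathbf U_+^{k_2}\Psi_2$$ equals $$\sum_{n_1+n_2=n}\binom{n}{n_1}\frac{(-1)^{n_1}}{\Gamma(2j_1+n_1)\Gamma(2j_2+n_2)}\mathbf L_+^{n_1}\Psi_1\otimes\mathbf L_+^{n_2}\Psi_2-(-1)^p\,n\sum_{m_1+m_2=n-1}\binom{n-1}{m_1}\frac{(-1)^{m_1}}{\Gamma(2j_1+1+m_1)\Gamma(2j_2+1+m_2)}\mathbf L_+^{m_1}\mathbf X\Psi_1\otimes\mathbf L_+^{m_2}\mathbf Y\Psi_2,$$ where $(\mathbf X,\mathbf Y)=(\mathbf V_+,\mathbf W_+)$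 for the upper signs and $(\mathbf X,\mathbf Y)=(\mathbf W_+,\mathbf V_+)$ for the lower signs, and the second sum is empty for $n=0$. This vector is a highest-weight vector of $[j_1,\mp j_1]\otimes[j_2,\pm j_2]$ with $\mathbf L$-eigenvalue $j_1+j_2+n$ and $\mathbf B$-eigenvalue $\mp(j_1-j_2)$.
   Context: $\mathfrak{sl}(2|1)$ denotes the complex Lie superalgebra with even basis $\mathbf L_+,\mathbf L_-,\mathbf L,\mathbf B$ and odd basis $\mathbf V_+,\mathbf V_-,\mathbf W_+,\mathbf W_-$, with relations: $[\mathbf L_+,\mathbf L_-]=2\mathbf L$, $[\mathbf L,\mathbf L_\pm]=\pm\mathbf L_\pm$, $\mathbf B$ commutes with $\mathbf L_\pm,\mathbf L$; for $\mathbf X\in\{\mathbf V,\mathbf W\}$: $[\mathbf L,\mathbf X_\pm]=\pm\tfrac12\mathbf X_\pm$, $[\mathbf L_+,\mathbf X_-]=\mathbf X_+$, $[\mathbf L_-,\mathbf X_+]=\mathbf X_-$, $[\mathbf L_+,\mathbf X_+]=[\mathbf L_-,\mathbf X_-]=0$; $[\mathbf B,\mathbf V_\pm]=\tfrac12\mathbf V_\pm$, $[\mathbf B,\mathbf W_\pm]=-\tfrac12\mathbf W_\pm$; $\{\mathbf V_a,\mathbf V_b\}=\{\mathbf W_a,\mathbf W_b\}=0$, $\{\mathbf V_+,\mathbf W_+\}=\mathbf L_+$, $\{\mathbf V_+,\mathbf W_-\}=-\mathbf L+\mathbf B$, $\{\mathbf V_-,\mathbf W_+\}=-\mathbf L-\mathbf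 B$, $\{\mathbf V_-,\mathbf W_-\}=-\mathbf L_-$. The left-chiral module $[J,-J]$ is the $\mathbb Z_2$-graded module generated by a homogeneous vector $\Omega$ with $\mathbf L_-\Omega=\mathbf V_-\Omega=\mathbf W_-\Omega=\mathbf W_+\Omega=0$, $\mathbf L\Omega=J\Omega$, $\mathbf B\Omega=-J\Omega$ (basis $\mathbf L_+^n\Omega,\mathbf L_+^n\mathbf V_+\Omega$); the right-chiral module $[J,J]$ is generated by $\Omega$ with $\mathbf L_-\Omega=\mathbf V_-\Omega=\mathbf W_-\Omega=\mathbf V_+\Omega=0$, $\mathbf L\Omega=J\Omega$, $\mathbf B\Omega=J\Omega$ (basis $\mathbf L_+^n\Omega,\mathbf L_+^n\mathbf W_+\Omega$). A highest-weight vector is one annihilated by $\mathbf L_-,\mathbf V_-,\mathbf W_-$. Tensor products carry the action $G(x\otimes y)=Gx\otimes y+(-1)^{|G||x|}x\otimes Gy$ for homogeneous $G,x$. Here $1/\Gamma$ is understood as the (entire) reciprocal Gamma function, and $\lfloor\cdot\rfloor$ is the floor function. *)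

theory Defs
  imports "HOL-Analysis.Analysis"
begin

text \<open>Generators of sl(2|1): L_+, L_-, L, B (even) and V_+, V_-, W_+, W_- (odd).\<close>
datatype gen = Lp | Lm | Lz | Bz | Vp | Vm | Wp | Wm

fun gen_odd :: "gen \<Rightarrow> bool" where
  "gen_odd Vp = True" | "gen_odd Vm = True" | "gen_odd Wp = True" | "gen_odd Wm = True"
| "gen_odd Lp = False" | "gen_odd Lm = False" | "gen_odd Lz = False" | "gen_odd Bz = False"

text \<open>Basis of a chiral module: index (n, False) is L_+^n Omega, and index (n, True) is
  L_+^n V_+ Omega (left-chiral [J,-J]) resp. L_+^n W_+ Omega (right-chiral [J,J]).\<close>
type_synonym idx = "nat \<times> bool"

definition bvec :: "'i \<Rightarrow> 'i \<Rightarrow> complex" where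
  "bvec b = (\<lambda>t. if t = b then 1 else 0)"

definition svec :: "real \<Rightarrow> 'i \<Rightarrow> 'i \<Rightarrow> complex" where
  "svec c b = (\<lambda>t. complex_of_real c * bvec b t)"

text \<open>Action of a generator on a basis vector of the chiral module; chi = True means
  left-chiral [J,-J], chi = False means right-chiral [J,J]. These are the formulas forced
  by the defining relations.\<close>
fun chiral_act :: "bool \<Rightarrow> real \<Rightarrow> gen \<Rightarrow> idx \<Rightarrow> idx \<Rightarrow> complex" where
  "chiral_act chi J Lp (n, b) = bvec (n + 1, b)"
| "chiral_act chi J Lm (n, b) =
     svec (- (real n * (2 * J + real n - (if b then 0 else 1)))) (n - 1, b)"
| "chiral_act chi J Lz (n, b) = svec (J + real n + (if b then 1/2 else 0)) (n, b)"
| "chiral_act chi J Bz (n, b) =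
     svec ((if chi then - J else J) + (if b then (if chi then 1/2 else - 1/2) else 0)) (n, b)"
| "chiral_act chi J Vp (n, b) =
     (if chi then (if b then (\<lambda>_. 0) else bvec (n, True))
      else (if b then bvec (n + 1, False) else (\<lambda>_. 0)))"
| "chiral_act chi J Wp (n, b) =
     (if chi then (if b then bvec (n + 1, False) else (\<lambda>_. 0))
      else (if b then (\<lambda>_. 0) else bvec (n, True)))"
| "chiral_act chi J Vm (n, b) =
     (if chi then (if b then (\<lambda>_. 0) else svec (- real n) (n - 1, True))
      else (if b then svec (- (2 * J + real n)) (n, False) else (\<lambda>_. 0)))"
| "chiral_act chi J Wm (n, b) =
     (if chi then (if b then svec (- (2 * J + real n)) (n, False) else (\<lambda>_. 0))
      else (if b then (\<lambda>_. 0) else svec (- real n) (n - 1, True)))"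

definition lin_ext :: "('i \<Rightarrow> 'j \<Rightarrow> complex) \<Rightarrow> ('i \<Rightarrow> complex) \<Rightarrow> 'j \<Rightarrow> complex" where
  "lin_ext f v = (\<lambda>t. \<Sum>b\<in>{b. v b \<noteq> 0}. v b * f b t)"

definition chiral_op :: "bool \<Rightarrow> real \<Rightarrow> gen \<Rightarrow> (idx \<Rightarrow> complex) \<Rightarrow> idx \<Rightarrow> complex" where
  "chiral_op chi J G = lin_ext (chiral_act chi J G)"

definition idx_parity :: "nat \<Rightarrow> idx \<Rightarrow> nat" where
  "idx_parity p b = (p + (if snd b then 1 else 0)) mod 2"

definition tens :: "('i \<Rightarrow> complex) \<Rightarrow> ('j \<Rightarrow> complex) \<Rightarrow> 'i \<times> 'j \<Rightarrow> complex" where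
  "tens x y = (\<lambda>(i, j). x i * y j)"

definition tensor_act :: "bool \<Rightarrow> real \<Rightarrow> nat \<Rightarrow> bool \<Rightarrow> real \<Rightarrow> nat \<Rightarrow> gen
    \<Rightarrow> idx \<times> idx \<Rightarrow> idx \<times> idx \<Rightarrow> complex" where
  "tensor_act chi1 J1 p1 chi2 J2 p2 G bb =
     (case bb of (b1, b2) \<Rightarrow>
       (\<lambda>t. tens (chiral_act chi1 J1 G b1) (bvec b2) t
          + (if gen_odd G \<and> idx_parity p1 b1 = 1 then -1 else 1)
            * tens (bvec b1) (chiral_act chi2 J2 G b2) t))"

definition tensor_op :: "bool \<Rightarrow> real \<Rightarrow> nat \<Rightarrow> bool \<Rightarrow> real \<Rightarrow> nat \<Rightarrow> gen
    \<Rightarrow> (idx \<times> idx \<Rightarrow> complex) \<Rightarrow> idx \<times> idx \<Rightarrow> complex" where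
  "tensor_op chi1 J1 p1 chi2 J2 p2 G = lin_ext (tensor_act chi1 J1 p1 chi2 J2 p2 G)"

definition U_op :: "bool \<Rightarrow> real \<Rightarrow> (idx \<Rightarrow> complex) \<Rightarrow> idx \<Rightarrow> complex" where
  "U_op chi J v = (\<lambda>t. chiral_op chi J Vp v t + chiral_op chi J Wp v t)"

end

(* U_+ maps L_+^m Psi to L_+^m X Psi and L_+^m X Psi to L_+^(m+1) Psi, so U_+^(2a) Psi = L_+^a Psi
   and U_+^(2a+1) Psi = L_+^a X Psi.  Splitting the sum over k1 by parity and using
   1/Gamma(1+m) = 1/m! turns the left-hand side into the right-hand side.  Both describe the vector
   whose coefficient on L_+^a1 Psi1 (x) L_+^a2 Psi2 is
     c_(j1,j2)(a1,a2) = binomial(a1+a2, a1) (-1)^a1 / (Gamma(2 j1 + a1) Gamma(2 j2 + a2)),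
   and on L_+^a1 X Psi1 (x) L_+^a2 Y Psi2 is -(-1)^p n c_(j1+1/2,j2+1/2)(a1,a2).  Coefficientwise,
   the highest-weight conditions are the contiguity relations of c under a1 -> a1+1 and
   a2 -> a2+1, which trade (j1,j2) for (j1+1/2,j2+1/2); W_- is V_- with the chiralities exchanged. *)

theory Submission
  imports Defs
begin

lemma lin_ext_eq_sum:
  assumes "finite S" "{b. v b \<noteq> 0} \<subseteq> S"
  shows "lin_ext f v t = (\<Sum>b\<in>S. v b * f b t)"
  unfolding lin_ext_def by (rule sum.mono_neutral_left) (use assms in auto)

lemma lin_ext_bvec: "lin_ext f (bvec b) = f b"
proof
  fix t show "lin_ext f (bvec b) t = f b t"
    by (subst lin_ext_eq_sum[where S="{b}"]) (auto simp: bvec_def)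
qed

lemma lin_ext_single_preimage:
  assumes "finite {b. v b \<noteq> 0}" "\<And>b. f b t = (if b = a then k else 0)"
  shows "lin_ext f v t = v a * k"
proof -
  have "lin_ext f v t = (\<Sum>b\<in>insert a {b. v b \<noteq> 0}. v b * f b t)"
    by (rule lin_ext_eq_sum) (use assms in auto)
  also have "\<dots> = v a * k"
    using assms by (simp add: if_distrib[of "(*) _"] cong: if_cong)
  finally show ?thesis .
qed

lemma finite_support_slices:
  assumes "finite {b. w b \<noteq> 0}"
  shows "finite {b. w (b, t2) \<noteq> 0}" and "finite {b. w (t1, b) \<noteq> 0}"
  using finite_vimageI[OF assms, of "\<lambda>b. (b, t2)"] finite_vimageI[OF assms, of "\<lambda>b. (t1, b)"]
  by (simp_all add: inj_on_def vimage_def)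

lemma chiral_op_single_preimage:
  assumes "finite {b. v b \<noteq> 0}"
    and "\<And>n \<beta>. chiral_act c J G (n, \<beta>) t = (if (n, \<beta>) = a then k else 0)"
  shows "chiral_op c J G v t = v a * k"
  unfolding chiral_op_def by (rule lin_ext_single_preimage) (use assms in auto)

lemma chiral_op_bvec: "chiral_op c J G (bvec b) = chiral_act c J G b"
  unfolding chiral_op_def by (rule lin_ext_bvec)

lemma tens_bvec: "tens (bvec a) (bvec b) = bvec (a, b)"
  by (auto simp: tens_def bvec_def)

lemma sum_mult_bvec: "finite A \<Longrightarrow> t \<in> A \<Longrightarrow> (\<Sum>b\<in>A. g b * bvec b t) = g t"
  by (simp add: bvec_def if_distrib[of "(*) _"] cong: if_cong)

lemma tensor_op_apply:
  assumes fin: "finite {b. w b \<noteq> 0}"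
  shows "tensor_op c1 J1 p1 c2 J2 p2 G w (t1, t2)
    = chiral_op c1 J1 G (\<lambda>b. w (b, t2)) t1
      + (if gen_odd G \<and> idx_parity p1 t1 = 1 then -1 else 1) * chiral_op c2 J2 G (\<lambda>b. w (t1, b)) t2"
    (is "_ = _ + ?sg t1 * _")
proof -
  define A where "A = insert t1 (fst ` {b. w b \<noteq> 0})"
  define B where "B = insert t2 (snd ` {b. w b \<noteq> 0})"
  have A: "finite A" "t1 \<in> A" "{b. w (b, t2) \<noteq> 0} \<subseteq> A"
    and B: "finite B" "t2 \<in> B" "{b. w (t1, b) \<noteq> 0} \<subseteq> B"
    using fin by (force simp: A_def B_def)+
  have "{b. w b \<noteq> 0} \<subseteq> A \<times> B"
    by (force simp: A_def B_def)
  then have "tensor_op c1 J1 p1 c2 J2 p2 G w (t1, t2)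
      = (\<Sum>b1\<in>A. \<Sum>b2\<in>B. w (b1, b2) * tensor_act c1 J1 p1 c2 J2 p2 G (b1, b2) (t1, t2))"
    unfolding tensor_op_def using A B by (simp add: lin_ext_eq_sum sum.cartesian_product)
  also have "\<dots> = (\<Sum>b1\<in>A. \<Sum>b2\<in>B. w (b1, b2) * chiral_act c1 J1 G b1 t1 * bvec b2 t2)
      + (\<Sum>b1\<in>A. \<Sum>b2\<in>B. ?sg b1 * w (b1, b2) * chiral_act c2 J2 G b2 t2 * bvec b1 t1)"
    by (simp add: tensor_act_def tens_def algebra_simps sum.distrib)
  also have "\<dots> = (\<Sum>b1\<in>A. w (b1, t2) * chiral_act c1 J1 G b1 t1)
      + ?sg t1 * (\<Sum>b2\<in>B. w (t1, b2) * chiral_act c2 J2 G b2 t2)"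
  proof -
    have "(\<Sum>b1\<in>A. \<Sum>b2\<in>B. ?sg b1 * w (b1, b2) * chiral_act c2 J2 G b2 t2 * bvec b1 t1)
        = ?sg t1 * (\<Sum>b2\<in>B. w (t1, b2) * chiral_act c2 J2 G b2 t2)"
      by (subst sum.swap, simp only: sum_mult_bvec[OF A(1,2)]) (simp add: sum_distrib_left mult_ac)
    then show ?thesis
      using B by (simp add: sum_mult_bvec)
  qed
  also have "\<dots> = chiral_op c1 J1 G (\<lambda>b. w (b, t2)) t1 + ?sg t1 * chiral_op c2 J2 G (\<lambda>b. w (t1, b)) t2"
    unfolding chiral_op_def using A B by (simp add: lin_ext_eq_sum)
  finally show ?thesis .
qed

lemma odd_sign_eq_power:
  "(if gen_odd G \<and> idx_parity p b = 1 then -1 else 1 :: 'a :: ring_1)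
     = (if gen_odd G then (-1) ^ (p + (if snd b then 1 else 0)) else 1)"
  by (auto simp: idx_parity_def minus_one_power_iff; presburger)

lemma chiral_op_Lm:
  "finite {b. v b \<noteq> 0} \<Longrightarrow> chiral_op c J Lm v (m, \<beta>)
     = v (Suc m, \<beta>) * of_real (- (real (Suc m) * (2 * J + real (Suc m) - (if \<beta> then 0 else 1))))"
  by (rule chiral_op_single_preimage) (auto simp: svec_def bvec_def split: nat.splits)

lemma chiral_op_Lz:
  "finite {b. v b \<noteq> 0} \<Longrightarrow>
   chiral_op c J Lz v (m, \<beta>) = v (m, \<beta>) * of_real (J + real m + (if \<beta> then 1/2 else 0))"
  by (rule chiral_op_single_preimage) (auto simp: svec_def bvec_def)

lemma chiral_op_Bz:
  "finite {b. v b \<noteq> 0} \<Longrightarrow> chiral_op c J Bz v (m, \<beta>)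
     = v (m, \<beta>) * of_real ((if c then - J else J) + (if \<beta> then (if c then 1/2 else - 1/2) else 0))"
  by (rule chiral_op_single_preimage) (auto simp: svec_def bvec_def)

lemma chiral_op_Vm_left:
  "finite {b. v b \<noteq> 0} \<Longrightarrow>
   chiral_op True J Vm v (m, \<beta>) = v (Suc m, False) * (if \<beta> then - of_nat (Suc m) else 0)"
  by (rule chiral_op_single_preimage) (auto simp: svec_def bvec_def split: nat.splits)

lemma chiral_op_Vm_right:
  "finite {b. v b \<noteq> 0} \<Longrightarrow>
   chiral_op False J Vm v (m, \<beta>) = v (m, True) * (if \<beta> then 0 else - of_real (2 * J + real m))"
  by (rule chiral_op_single_preimage) (auto simp: svec_def bvec_def)

lemma chiral_act_Wm_eq_Vm: "chiral_act c J Wm = chiral_act (\<not> c) J Vm"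
  by (intro ext) auto

lemma tensor_op_Wm_eq_Vm: "tensor_op c1 J1 p1 c2 J2 p2 Wm = tensor_op (\<not> c1) J1 p1 (\<not> c2) J2 p2 Vm"
  unfolding tensor_op_def tensor_act_def chiral_act_Wm_eq_Vm by simp

lemma U_op_bvec: "U_op c J (bvec (m, \<beta>)) = (if \<beta> then bvec (Suc m, False) else bvec (m, True))"
  unfolding U_op_def chiral_op_bvec by (cases c; cases \<beta>) (auto simp: bvec_def)

lemma U_op_pow_ground: "(U_op c J ^^ k) (bvec (0, False)) = bvec (k div 2, odd k)"
  by (induction k) (auto simp: U_op_bvec)

lemma Lp_pow_ground: "(chiral_op c J Lp ^^ k) (bvec (0, \<beta>)) = bvec (k, \<beta>)"
  by (induction k) (auto simp: chiral_op_bvec)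

lemma chiral_op_odd_ground: "chiral_op c J (if c then Vp else Wp) (bvec (0, False)) = bvec (0, True)"
  by (cases c) (simp_all add: chiral_op_bvec)

lemma sum_bvec_at:
  assumes "finite A" "\<And>a. a \<in> A \<Longrightarrow> g a = t \<Longrightarrow> a = a'"
  shows "(\<Sum>a\<in>A. f a * bvec (g a) t) = (if a' \<in> A \<and> g a' = t then f a' else 0)"
proof -
  have "(\<Sum>a\<in>A. f a * bvec (g a) t)
      = (\<Sum>a\<in>A. if a = a' then (if g a' = t then f a' else 0) else 0)"
    by (rule sum.cong) (auto simp: bvec_def dest: assms(2))
  then show ?thesis
    using assms(1) by simp
qed

lemma sum_atLeast0_atMost_double:
  fixes n :: nat
  shows "(\<Sum>k = 0..2 * n. f k) = (\<Sum>a = 0..n. f (2 * a)) + (\<Sum>a<n. f (2 * a + 1))"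
  by (induction n) (simp_all add: atLeast0AtMost algebra_simps)

(* The first equation loops as a rewrite rule (its right-hand side matches again with j + 1/2),
   so it is only ever used instantiated. *)
lemma rGamma_shift_half:
  "rGamma (2 * j + real a) = (2 * j + real a) * rGamma (2 * (j + 1/2) + real a)"
  "rGamma (2 * j + real (Suc a)) = rGamma (2 * (j + 1/2) + real a)"
  using rGamma_plus1[of "2 * j + real a"] by (simp_all add: algebra_simps)

lemma rGamma_one_plus_nat: "rGamma (1 + real m) = inverse (fact m)"
  using Gamma_fact[of m] by (simp add: rGamma_inverse_Gamma)

lemma binomial_eq_fact_rGamma:
  "real ((a1 + a2) choose a1) = fact (a1 + a2) * rGamma (1 + real a1) * rGamma (1 + real a2)"
  by (simp add: binomial_fact rGamma_one_plus_nat field_simps)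

definition sl2_hw_coeff :: "real \<Rightarrow> real \<Rightarrow> nat \<Rightarrow> nat \<Rightarrow> real" where
  "sl2_hw_coeff j1 j2 a1 a2 =
     real ((a1 + a2) choose a1) * (-1) ^ a1 * rGamma (2 * j1 + real a1) * rGamma (2 * j2 + real a2)"

lemma sl2_hw_coeff_Suc_left:
  "real (Suc a1) * sl2_hw_coeff j1 j2 (Suc a1) a2
     = - real (a1 + a2 + 1) * (2 * j2 + real a2) * sl2_hw_coeff (j1 + 1/2) (j2 + 1/2) a1 a2"
proof -
  have "Suc a1 * (Suc a1 + a2 choose Suc a1) = Suc (a1 + a2) * (a1 + a2 choose a1)"
    using Suc_times_binomial[of a1 "a1 + a2"] by simp
  then have "real (Suc a1) * real ((Suc a1 + a2) choose Suc a1)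
      = real (a1 + a2 + 1) * real ((a1 + a2) choose a1)"
    by (simp only: Suc_eq_plus1 flip: of_nat_mult)
  then show ?thesis
    unfolding sl2_hw_coeff_def rGamma_shift_half(1)[of j2 a2] rGamma_shift_half(2)[of j1 a1] power_Suc
    by (simp del: of_nat_Suc binomial_Suc_Suc of_nat_add add: mult_ac)
qed

lemma sl2_hw_coeff_Suc_right:
  "real (Suc a2) * sl2_hw_coeff j1 j2 a1 (Suc a2)
     = real (a1 + a2 + 1) * (2 * j1 + real a1) * sl2_hw_coeff (j1 + 1/2) (j2 + 1/2) a1 a2"
proof -
  have "Suc a2 * (a1 + Suc a2 choose a1) = Suc (a1 + a2) * (a1 + a2 choose a1)"
    using binomial_absorb_comp[of "Suc (a1 + a2)" a1] by (simp add: Suc_diff_le)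
  then have "real (Suc a2) * real ((a1 + Suc a2) choose a1)
      = real (a1 + a2 + 1) * real ((a1 + a2) choose a1)"
    by (simp only: Suc_eq_plus1 flip: of_nat_mult)
  then show ?thesis
    unfolding sl2_hw_coeff_def rGamma_shift_half(1)[of j1 a1] rGamma_shift_half(2)[of j2 a2]
    by (simp del: of_nat_Suc binomial_Suc_Suc of_nat_add add: mult_ac)
qed

lemma sl2_hw_coeff_lowering:
  "real (Suc a1) * (2 * j1 + real a1) * sl2_hw_coeff j1 j2 (Suc a1) a2
     + real (Suc a2) * (2 * j2 + real a2) * sl2_hw_coeff j1 j2 a1 (Suc a2) = 0"
proof -
  have "real (Suc a1) * (2 * j1 + real a1) * sl2_hw_coeff j1 j2 (Suc a1) a2
      + real (Suc a2) * (2 * j2 + real a2) * sl2_hw_coeff j1 j2 a1 (Suc a2)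
      = (2 * j1 + real a1) * (real (Suc a1) * sl2_hw_coeff j1 j2 (Suc a1) a2)
      + (2 * j2 + real a2) * (real (Suc a2) * sl2_hw_coeff j1 j2 a1 (Suc a2))"
    by (simp only: mult_ac)
  also have "\<dots> = 0"
    unfolding sl2_hw_coeff_Suc_left sl2_hw_coeff_Suc_right by (simp add: algebra_simps)
  finally show ?thesis .
qed

definition hw_vec :: "real \<Rightarrow> real \<Rightarrow> nat \<Rightarrow> nat \<Rightarrow> idx \<times> idx \<Rightarrow> complex" where
  "hw_vec j1 j2 p n = (\<lambda>((a1, \<beta>1), (a2, \<beta>2)).
     if \<not> \<beta>1 \<and> \<not> \<beta>2 \<and> a1 + a2 = n then of_real (sl2_hw_coeff j1 j2 a1 a2)
     else if \<beta>1 \<and> \<beta>2 \<and> a1 + a2 + 1 = n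
       then (-1) ^ Suc p * of_nat n * of_real (sl2_hw_coeff (j1 + 1/2) (j2 + 1/2) a1 a2)
     else 0)"

lemma hw_vec_finite_support: "finite {t. hw_vec j1 j2 p n t \<noteq> 0}"
proof (rule finite_subset)
  show "{t. hw_vec j1 j2 p n t \<noteq> 0} \<subseteq> ({..n} \<times> UNIV) \<times> ({..n} \<times> UNIV)"
    by (auto simp: hw_vec_def split: if_splits)
qed simp

lemma hw_vec_support:
  "hw_vec j1 j2 p n ((a1, \<beta>1), (a2, \<beta>2)) \<noteq> 0 \<Longrightarrow> \<beta>1 = \<beta>2 \<and> a1 + a2 + (if \<beta>1 then 1 else 0) = n"
  by (auto simp: hw_vec_def split: if_splits)

lemma hw_vec_expansion:
  "hw_vec j1 j2 p n = (\<lambda>t.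
     (\<Sum>a = 0..n. of_real (sl2_hw_coeff j1 j2 a (n - a)) * bvec ((a, False), (n - a, False)) t)
     + (\<Sum>a<n. (-1) ^ Suc p * of_nat n * of_real (sl2_hw_coeff (j1 + 1/2) (j2 + 1/2) a (n - 1 - a))
                 * bvec ((a, True), (n - 1 - a, True)) t))"
proof (intro ext, clarify)
  fix a1 a2 :: nat and \<beta>1 \<beta>2 :: bool
  let ?t = "((a1, \<beta>1), (a2, \<beta>2))"
  have "(\<Sum>a = 0..n. of_real (sl2_hw_coeff j1 j2 a (n - a)) * bvec ((a, False), (n - a, False)) ?t)
      = (if \<not> \<beta>1 \<and> \<not> \<beta>2 \<and> a1 + a2 = n then of_real (sl2_hw_coeff j1 j2 a1 a2) else 0)"
    by (subst sum_bvec_at[where a' = a1]) auto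
  moreover have "(\<Sum>a<n. (-1) ^ Suc p * of_nat n * of_real (sl2_hw_coeff (j1 + 1/2) (j2 + 1/2) a (n - 1 - a))
        * bvec ((a, True), (n - 1 - a, True)) ?t)
      = (if \<beta>1 \<and> \<beta>2 \<and> a1 + a2 + 1 = n
         then (-1) ^ Suc p * of_nat n * of_real (sl2_hw_coeff (j1 + 1/2) (j2 + 1/2) a1 a2) else 0)"
    by (subst sum_bvec_at[where a' = a1]) auto
  ultimately show "hw_vec j1 j2 p n ?t
    = (\<Sum>a = 0..n. of_real (sl2_hw_coeff j1 j2 a (n - a)) * bvec ((a, False), (n - a, False)) ?t)
      + (\<Sum>a<n. (-1) ^ Suc p * of_nat n * of_real (sl2_hw_coeff (j1 + 1/2) (j2 + 1/2) a (n - 1 - a))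
                 * bvec ((a, True), (n - 1 - a, True)) ?t)"
    by (auto simp: hw_vec_def)
qed

lemma hw_vec_Lm: "tensor_op c1 j1 p1 c2 j2 p2 Lm (hw_vec j1 j2 p n) = (\<lambda>_. 0)"
proof (intro ext, clarify)
  fix a1 \<beta>1 a2 \<beta>2
  note fin = hw_vec_finite_support[of j1 j2 p n]
  have "tensor_op c1 j1 p1 c2 j2 p2 Lm (hw_vec j1 j2 p n) ((a1, \<beta>1), (a2, \<beta>2))
    = hw_vec j1 j2 p n ((Suc a1, \<beta>1), (a2, \<beta>2))
        * of_real (- (real (Suc a1) * (2 * j1 + real (Suc a1) - (if \<beta>1 then 0 else 1))))
      + hw_vec j1 j2 p n ((a1, \<beta>1), (Suc a2, \<beta>2))
        * of_real (- (real (Suc a2) * (2 * j2 + real (Suc a2) - (if \<beta>2 then 0 else 1))))"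
    by (simp add: tensor_op_apply[OF fin] chiral_op_Lm finite_support_slices[OF fin])
  also have "\<dots> = 0" (is "?lhs = 0")
  proof -
    consider "\<not> \<beta>1" "\<not> \<beta>2" "a1 + a2 + 1 = n" | "\<beta>1" "\<beta>2" "a1 + a2 + 2 = n"
      | "\<not> ((\<not> \<beta>1 \<and> \<not> \<beta>2 \<and> a1 + a2 + 1 = n) \<or> (\<beta>1 \<and> \<beta>2 \<and> a1 + a2 + 2 = n))"
      by blast
    then show ?thesis
    proof cases
      case 1
      then have "?lhs = - of_real (real (Suc a1) * (2 * j1 + real a1) * sl2_hw_coeff j1 j2 (Suc a1) a2
          + real (Suc a2) * (2 * j2 + real a2) * sl2_hw_coeff j1 j2 a1 (Suc a2))"
        by (simp add: hw_vec_def algebra_simps)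
      then show ?thesis
        by (simp only: sl2_hw_coeff_lowering) simp
    next
      case 2
      then have "?lhs = (-1) ^ p * of_nat n * of_real
          (real (Suc a1) * (2 * (j1 + 1/2) + real a1) * sl2_hw_coeff (j1 + 1/2) (j2 + 1/2) (Suc a1) a2
           + real (Suc a2) * (2 * (j2 + 1/2) + real a2) * sl2_hw_coeff (j1 + 1/2) (j2 + 1/2) a1 (Suc a2))"
        by (simp add: hw_vec_def algebra_simps)
      then show ?thesis
        by (simp only: sl2_hw_coeff_lowering) simp
    next
      case 3
      then show ?thesis
        by (auto simp: hw_vec_def)
    qed
  qed
  finally show "tensor_op c1 j1 p1 c2 j2 p2 Lm (hw_vec j1 j2 p n) ((a1, \<beta>1), (a2, \<beta>2)) = 0" .
qed

lemma hw_vec_Lz: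
  "tensor_op c1 j1 p1 c2 j2 p2 Lz (hw_vec j1 j2 p n) = (\<lambda>t. of_real (j1 + j2 + real n) * hw_vec j1 j2 p n t)"
proof (intro ext, clarify)
  fix a1 \<beta>1 a2 \<beta>2
  note fin = hw_vec_finite_support[of j1 j2 p n]
  show "tensor_op c1 j1 p1 c2 j2 p2 Lz (hw_vec j1 j2 p n) ((a1, \<beta>1), (a2, \<beta>2))
      = of_real (j1 + j2 + real n) * hw_vec j1 j2 p n ((a1, \<beta>1), (a2, \<beta>2))"
  proof (cases "hw_vec j1 j2 p n ((a1, \<beta>1), (a2, \<beta>2)) = 0")
    case False
    then have "\<beta>1 = \<beta>2" "real n = real a1 + real a2 + (if \<beta>1 then 1 else 0)"
      using hw_vec_support by force+
    then show ?thesis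
      by (simp add: tensor_op_apply[OF fin] chiral_op_Lz finite_support_slices[OF fin] algebra_simps)
  qed (simp add: tensor_op_apply[OF fin] chiral_op_Lz finite_support_slices[OF fin])
qed

lemma hw_vec_Bz:
  "tensor_op c j1 p1 (\<not> c) j2 p2 Bz (hw_vec j1 j2 p n)
     = (\<lambda>t. of_real (if c then - (j1 - j2) else j1 - j2) * hw_vec j1 j2 p n t)"
proof (intro ext, clarify)
  fix a1 \<beta>1 a2 \<beta>2
  note fin = hw_vec_finite_support[of j1 j2 p n]
  show "tensor_op c j1 p1 (\<not> c) j2 p2 Bz (hw_vec j1 j2 p n) ((a1, \<beta>1), (a2, \<beta>2))
      = of_real (if c then - (j1 - j2) else j1 - j2) * hw_vec j1 j2 p n ((a1, \<beta>1), (a2, \<beta>2))"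
  proof (cases "hw_vec j1 j2 p n ((a1, \<beta>1), (a2, \<beta>2)) = 0")
    case False
    then have "\<beta>1 = \<beta>2"
      using hw_vec_support by force
    then show ?thesis
      by (simp add: tensor_op_apply[OF fin] chiral_op_Bz finite_support_slices[OF fin] algebra_simps)
  qed (simp add: tensor_op_apply[OF fin] chiral_op_Bz finite_support_slices[OF fin])
qed

lemma hw_vec_Vm_left_right: "tensor_op True j1 p False j2 q Vm (hw_vec j1 j2 p n) = (\<lambda>_. 0)"
proof (intro ext, clarify)
  fix a1 \<beta>1 a2 \<beta>2
  note fin = hw_vec_finite_support[of j1 j2 p n]
  have "tensor_op True j1 p False j2 q Vm (hw_vec j1 j2 p n) ((a1, \<beta>1), (a2, \<beta>2))
    = hw_vec j1 j2 p n ((Suc a1, False), (a2, \<beta>2)) * (if \<beta>1 then - of_nat (Suc a1) else 0)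
      + (-1) ^ (p + (if \<beta>1 then 1 else 0))
        * (hw_vec j1 j2 p n ((a1, \<beta>1), (a2, True)) * (if \<beta>2 then 0 else - of_real (2 * j2 + real a2)))"
    unfolding tensor_op_apply[OF fin] odd_sign_eq_power
    by (simp add: chiral_op_Vm_left chiral_op_Vm_right finite_support_slices[OF fin])
  also have "\<dots> = 0" (is "?lhs = 0")
  proof (cases "\<beta>1 \<and> \<not> \<beta>2 \<and> a1 + a2 + 1 = n")
    case True
    then have "?lhs = - of_real (real (Suc a1) * sl2_hw_coeff j1 j2 (Suc a1) a2
        + real (a1 + a2 + 1) * (2 * j2 + real a2) * sl2_hw_coeff (j1 + 1/2) (j2 + 1/2) a1 a2)"
      by (auto simp: hw_vec_def algebra_simps)
    then show ?thesis
      by (simp only: sl2_hw_coeff_Suc_left) (simp add: algebra_simps)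
  qed (auto simp: hw_vec_def)
  finally show "tensor_op True j1 p False j2 q Vm (hw_vec j1 j2 p n) ((a1, \<beta>1), (a2, \<beta>2)) = 0" .
qed

lemma hw_vec_Vm_right_left: "tensor_op False j1 p True j2 q Vm (hw_vec j1 j2 p n) = (\<lambda>_. 0)"
proof (intro ext, clarify)
  fix a1 \<beta>1 a2 \<beta>2
  note fin = hw_vec_finite_support[of j1 j2 p n]
  have "tensor_op False j1 p True j2 q Vm (hw_vec j1 j2 p n) ((a1, \<beta>1), (a2, \<beta>2))
    = hw_vec j1 j2 p n ((a1, True), (a2, \<beta>2)) * (if \<beta>1 then 0 else - of_real (2 * j1 + real a1))
      + (-1) ^ (p + (if \<beta>1 then 1 else 0))
        * (hw_vec j1 j2 p n ((a1, \<beta>1), (Suc a2, False)) * (if \<beta>2 then - of_nat (Suc a2) else 0))"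
    unfolding tensor_op_apply[OF fin] odd_sign_eq_power
    by (simp add: chiral_op_Vm_left chiral_op_Vm_right finite_support_slices[OF fin])
  also have "\<dots> = 0" (is "?lhs = 0")
  proof (cases "\<not> \<beta>1 \<and> \<beta>2 \<and> a1 + a2 + 1 = n")
    case True
    then have "?lhs = (-1) ^ p * of_real
        (real (a1 + a2 + 1) * (2 * j1 + real a1) * sl2_hw_coeff (j1 + 1/2) (j2 + 1/2) a1 a2
        - real (Suc a2) * sl2_hw_coeff j1 j2 a1 (Suc a2))"
      by (auto simp: hw_vec_def algebra_simps)
    then show ?thesis
      by (simp only: sl2_hw_coeff_Suc_right) simp
  qed (auto simp: hw_vec_def)
  finally show "tensor_op False j1 p True j2 q Vm (hw_vec j1 j2 p n) ((a1, \<beta>1), (a2, \<beta>2)) = 0" .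
qed

lemma hw_vec_Vm: "tensor_op c j1 p (\<not> c) j2 q Vm (hw_vec j1 j2 p n) = (\<lambda>_. 0)"
  by (cases c) (simp_all add: hw_vec_Vm_left_right hw_vec_Vm_right_left)

definition U_coeff :: "real \<Rightarrow> real \<Rightarrow> nat \<Rightarrow> nat \<Rightarrow> nat \<Rightarrow> real" where
  "U_coeff j1 j2 p n k =
     (-1) ^ ((k + 1 - p) div 2) * rGamma (1 + real (k div 2)) * rGamma (1 + real ((2 * n - k) div 2))
     * rGamma (2 * j1 + real ((k + 1) div 2)) * rGamma (2 * j2 + real ((2 * n - k + 1) div 2))"

lemma U_coeff_even:
  assumes "p \<le> 1" "a \<le> n"
  shows "fact n * U_coeff j1 j2 p n (2 * a) = sl2_hw_coeff j1 j2 a (n - a)"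
proof -
  have "(2 * a + 1 - p) div 2 = a" "(2 * n - 2 * a) div 2 = n - a" "(2 * n - 2 * a + 1) div 2 = n - a"
    using assms by auto
  moreover have "real (n choose a) = fact n * rGamma (1 + real a) * rGamma (1 + real (n - a))"
    using binomial_eq_fact_rGamma[of a "n - a"] assms(2) by simp
  ultimately show ?thesis
    by (simp add: U_coeff_def sl2_hw_coeff_def assms(2))
qed

lemma U_coeff_odd:
  assumes "p \<le> 1" "a < n"
  shows "fact n * U_coeff j1 j2 p n (2 * a + 1)
    = (-1) ^ Suc p * real n * sl2_hw_coeff (j1 + 1/2) (j2 + 1/2) a (n - 1 - a)"
proof -
  have divs: "(2 * a + 1 + 1 - p) div 2 = a + 1 - p" "(2 * a + 1) div 2 = a" "(2 * a + 1 + 1) div 2 = Suc a"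
    "(2 * n - (2 * a + 1)) div 2 = n - 1 - a" "(2 * n - (2 * a + 1) + 1) div 2 = Suc (n - 1 - a)"
    using assms by (auto simp: le_Suc_eq)
  have "U_coeff j1 j2 p n (2 * a + 1)
      = (-1) ^ (a + 1 - p) * rGamma (1 + real a) * rGamma (1 + real (n - 1 - a))
        * rGamma (2 * (j1 + 1/2) + real a) * rGamma (2 * (j2 + 1/2) + real (n - 1 - a))"
    unfolding U_coeff_def divs rGamma_shift_half(2) ..
  moreover have "(-1 :: real) ^ (a + 1 - p) = (-1) ^ Suc p * (-1) ^ a"
    using assms by (cases p) auto
  moreover have "fact n = real n * fact (a + (n - 1 - a))"
    using assms(2) by (simp add: fact_reduce)
  ultimately show ?thesis
    by (simp add: sl2_hw_coeff_def binomial_eq_fact_rGamma algebra_simps)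
qed

lemma sum_U_pow_tens_split_parity:
  fixes f :: "nat \<Rightarrow> complex"
  shows "(\<Sum>k = 0..2 * n. f k
      * tens ((U_op c1 J1 ^^ k) (bvec (0, False))) ((U_op c2 J2 ^^ (2 * n - k)) (bvec (0, False))) t)
    = (\<Sum>a = 0..n. f (2 * a) * bvec ((a, False), (n - a, False)) t)
      + (\<Sum>a<n. f (2 * a + 1) * bvec ((a, True), (n - 1 - a, True)) t)"
  unfolding U_op_pow_ground tens_bvec sum_atLeast0_atMost_double
proof (intro arg_cong2[where f = "(+)"] sum.cong refl)
  fix a assume "a \<in> {..<n}"
  then have "(2 * n - (2 * a + 1)) div 2 = n - 1 - a" "odd (2 * n - (2 * a + 1))"
    by (auto simp: less_iff_Suc_add)
  then show "f (2 * a + 1)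
      * bvec (((2 * a + 1) div 2, odd (2 * a + 1)), ((2 * n - (2 * a + 1)) div 2, odd (2 * n - (2 * a + 1)))) t
    = f (2 * a + 1) * bvec ((a, True), (n - 1 - a, True)) t"
    by simp
qed (auto simp: diff_mult_distrib2[symmetric])

lemma U_expansion_eq_hw_vec:
  assumes "p \<le> 1"
  shows "of_real (fact n) * (\<Sum>k = 0..2 * n. of_real (U_coeff j1 j2 p n k)
      * tens ((U_op c1 j1 ^^ k) (bvec (0, False))) ((U_op c2 j2 ^^ (2 * n - k)) (bvec (0, False))) t)
    = hw_vec j1 j2 p n t"
proof -
  have "of_real (fact n) * (\<Sum>k = 0..2 * n. of_real (U_coeff j1 j2 p n k)
      * tens ((U_op c1 j1 ^^ k) (bvec (0, False))) ((U_op c2 j2 ^^ (2 * n - k)) (bvec (0, False))) t)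
    = (\<Sum>a = 0..n. of_real (fact n * U_coeff j1 j2 p n (2 * a)) * bvec ((a, False), (n - a, False)) t)
      + (\<Sum>a<n. of_real (fact n * U_coeff j1 j2 p n (2 * a + 1)) * bvec ((a, True), (n - 1 - a, True)) t)"
    unfolding sum_U_pow_tens_split_parity by (simp add: distrib_left sum_distrib_left mult.assoc)
  also have "\<dots> = hw_vec j1 j2 p n t"
    unfolding hw_vec_expansion
  proof (intro arg_cong2[where f = "(+)"] sum.cong refl)
    fix a assume "a \<in> {0..n}"
    then show "of_real (fact n * U_coeff j1 j2 p n (2 * a)) * bvec ((a, False), (n - a, False)) t
      = of_real (sl2_hw_coeff j1 j2 a (n - a)) * bvec ((a, False), (n - a, False)) t"
      by (subst U_coeff_even[OF assms]) auto
  next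
    fix a assume "a \<in> {..<n}"
    then show "of_real (fact n * U_coeff j1 j2 p n (2 * a + 1)) * bvec ((a, True), (n - 1 - a, True)) t
      = (-1) ^ Suc p * of_nat n * of_real (sl2_hw_coeff (j1 + 1/2) (j2 + 1/2) a (n - 1 - a))
        * bvec ((a, True), (n - 1 - a, True)) t"
      by (subst U_coeff_odd[OF assms]) auto
  qed
  finally show ?thesis .
qed

lemma L_expansion_eq_hw_vec:
  "(\<Sum>n1 = 0..n.
      of_real (real (n choose n1) * (-1) ^ n1 * rGamma (2 * j1 + real n1) * rGamma (2 * j2 + real (n - n1)))
      * tens ((chiral_op c1 j1 Lp ^^ n1) (bvec (0, False))) ((chiral_op c2 j2 Lp ^^ (n - n1)) (bvec (0, False))) t)
   - (-1) ^ p * of_nat n *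
     (if n = 0 then 0 else
      (\<Sum>m1 = 0..n - 1.
         of_real (real ((n - 1) choose m1) * (-1) ^ m1
           * rGamma (2 * j1 + 1 + real m1) * rGamma (2 * j2 + 1 + real (n - 1 - m1)))
         * tens ((chiral_op c1 j1 Lp ^^ m1) (bvec (0, True)))
                ((chiral_op c2 j2 Lp ^^ (n - 1 - m1)) (bvec (0, True))) t))
   = hw_vec j1 j2 p n t"
proof -
  have odd_range: "(if n = 0 then 0 else (\<Sum>m1 = 0..n - 1. f m1)) = (\<Sum>m1<n. f m1)"
    for f :: "nat \<Rightarrow> complex"
    by (cases n) (simp_all add: atLeast0AtMost lessThan_Suc_atMost)
  have "2 * (j + 1/2) + x = 2 * j + 1 + x" for j x :: real
    by simp
  then show ?thesis
    unfolding hw_vec_expansion Lp_pow_ground tens_bvec odd_range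
    by (simp add: sum_distrib_left sum_negf sl2_hw_coeff_def mult.assoc)
qed

theorem mainTheorem2:
  fixes j1 j2 :: real and p q n :: nat and up :: bool
    and \<Psi> :: "idx \<Rightarrow> complex" and X Y :: gen
    and lhs rhs :: "idx \<times> idx \<Rightarrow> complex"
  assumes hp: "p \<le> 1" and hq: "q \<le> 1"
  defines "\<Psi> \<equiv> bvec (0::nat, False)"
      and "X \<equiv> (if up then Vp else Wp)"
      and "Y \<equiv> (if up then Wp else Vp)"
      and "lhs \<equiv> (\<lambda>t. complex_of_real (fact n) *
             (\<Sum>k1 = 0..2*n.
                complex_of_real ((-1) ^ ((k1 + 1 - p) div 2)
                  * rGamma (1 + real (k1 div 2)) * rGamma (1 + real ((2*n - k1) div 2))
                  * rGamma (2 * j1 + real ((k1 + 1) div 2))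
                  * rGamma (2 * j2 + real ((2*n - k1 + 1) div 2)))
                * tens ((U_op up j1 ^^ k1) \<Psi>) ((U_op (\<not> up) j2 ^^ (2*n - k1)) \<Psi>) t))"
      and "rhs \<equiv> (\<lambda>t.
             (\<Sum>n1 = 0..n.
                complex_of_real (real (n choose n1) * (-1) ^ n1
                  * rGamma (2 * j1 + real n1) * rGamma (2 * j2 + real (n - n1)))
                * tens ((chiral_op up j1 Lp ^^ n1) \<Psi>)
                       ((chiral_op (\<not> up) j2 Lp ^^ (n - n1)) \<Psi>) t)
           - (-1) ^ p * of_nat n *
             (if n = 0 then 0 else
              (\<Sum>m1 = 0..n-1.
                complex_of_real (real ((n-1) choose m1) * (-1) ^ m1
                  * rGamma (2 * j1 + 1 + real m1) * rGamma (2 * j2 + 1 + real (n - 1 - m1)))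
                * tens ((chiral_op up j1 Lp ^^ m1) (chiral_op up j1 X \<Psi>))
                       ((chiral_op (\<not> up) j2 Lp ^^ (n - 1 - m1)) (chiral_op (\<not> up) j2 Y \<Psi>)) t)))"
  shows "lhs = rhs
    \<and> tensor_op up j1 p (\<not> up) j2 q Lm lhs = (\<lambda>_. 0)
    \<and> tensor_op up j1 p (\<not> up) j2 q Vm lhs = (\<lambda>_. 0)
    \<and> tensor_op up j1 p (\<not> up) j2 q Wm lhs = (\<lambda>_. 0)
    \<and> tensor_op up j1 p (\<not> up) j2 q Lz lhs
        = (\<lambda>t. complex_of_real (j1 + j2 + real n) * lhs t)
    \<and> tensor_op up j1 p (\<not> up) j2 q Bz lhs
        = (\<lambda>t. complex_of_real (if up then - (j1 - j2) else j1 - j2) * lhs t)"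
proof -
  have odd_ground: "chiral_op up j1 X \<Psi> = bvec (0, True)" "chiral_op (\<not> up) j2 Y \<Psi> = bvec (0, True)"
    using chiral_op_odd_ground[of up j1] chiral_op_odd_ground[of "\<not> up" j2]
    unfolding X_def Y_def \<Psi>_def by (simp_all split: if_splits)
  have lhs: "lhs = hw_vec j1 j2 p n"
    unfolding lhs_def \<Psi>_def by (intro ext) (rule U_expansion_eq_hw_vec[OF hp, unfolded U_coeff_def])
  have rhs: "rhs = hw_vec j1 j2 p n"
    unfolding rhs_def odd_ground unfolding \<Psi>_def by (intro ext) (rule L_expansion_eq_hw_vec)
  show ?thesis
    unfolding lhs rhs tensor_op_Wm_eq_Vm
    using hw_vec_Lm hw_vec_Lz hw_vec_Bz hw_vec_Vm[of up] hw_vec_Vm[of "\<not> up"] by simp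
qed

end
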